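(* Let $c$ be a prime of the form $2^r\cdot 3+1$ ($r\ge 1$), and let $a,b>1$ be integers with $a,b,c$ pairwise coprime and $e_c(b)=3$. Suppose positive integers $z,Y,Z$ with $z\le Z$ and $Y\equiv 4\pmod 6$ satisfy $a+b=c^z$ and $a+b^Y=c^Z$. Write $Y=1+3N$ ($N$ odd) and $e=\nu_c(N)$, and let $I(t)=\sum_{j=0}^{N-1}t^{3j}\in\mathbb Z[t]$. Then $e<z$ and there is a positive integer $K$ with $\gcd(K,c)=1$ such that \[ b^2+b+1=K\,c^{z-e},\qquad b(b-1)\,I(b)\,K=c^e(c^{Z-z}-1). \]
   Context: For a positive integer $M$ and an integer $A$ coprime to $M$, $e_M(A)$ denotes the least positive integer $e$ such that $A^e\equiv 1$ or $A^e\equiv -1\pmod M$. $\nu_c$ is the $c$-adic valuation. *)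

theory Defs
  imports "HOL-Number_Theory.Number_Theory" "HOL-Computational_Algebra.Polynomial"
begin

definition e_pm :: "int \<Rightarrow> int \<Rightarrow> nat" where
  "e_pm M A = (LEAST e. e > 0 \<and> ([A ^ e = 1] (mod M) \<or> [A ^ e = -1] (mod M)))"

definition I_poly :: "nat \<Rightarrow> int poly" where
  "I_poly N = (\<Sum>j<N. monom 1 (3 * j))"

end

theory Submission imports Defs begin

(* Subtracting a + b = c^z from a + b^Y = c^Z gives
     b (b - 1) (b^2 + b + 1) I(b) = b^Y - b = c^z (c^(Z-z) - 1).
   Since N is odd and e_c(b) = 3, b has order exactly 3 modulo c, so c divides b^2 + b + 1 but
   neither b nor b - 1, nor c^(Z-z) - 1 (the left side is positive, so Z > z). As
   I(b) = sum_{j<N} (b^3)^j with b^3 = 1 (mod c), lifting the exponent gives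
   nu_c(I(b)) = nu_c(N) = e. Comparing c-adic valuations yields nu_c(b^2 + b + 1) = z - e > 0,
   and K is the c-free part of b^2 + b + 1. *)

lemma geometric_sum_mult_split:
  fixes x :: "'a::idom"
  shows "(\<Sum>j<m*q. x^j) = (\<Sum>j<m. x^j) * (\<Sum>i<q. (x^m)^i)"
proof (cases "x = 1")
  case True
  then show ?thesis by simp
next
  case False
  have "(x - 1) * (\<Sum>j<m*q. x^j) = (x^m)^q - 1"
    by (simp add: power_diff_1_eq[symmetric] power_mult)
  also have "\<dots> = (x^m - 1) * (\<Sum>i<q. (x^m)^i)"
    by (rule power_diff_1_eq)
  also have "\<dots> = (x - 1) * ((\<Sum>j<m. x^j) * (\<Sum>i<q. (x^m)^i))"
    by (simp add: power_diff_1_eq)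
  finally show ?thesis
    using False by simp
qed

lemma power_one_plus_mult_dvd:
  fixes p t :: "'a::comm_ring_1"
  shows "p^2 dvd (1 + t*p)^i - (1 + of_nat i * t * p)"
proof (induction i)
  case 0
  then show ?case by simp
next
  case (Suc i)
  then obtain k where k: "(1 + t*p)^i - (1 + of_nat i * t * p) = p^2 * k"
    by blast
  have "(1 + t*p)^Suc i - (1 + of_nat (Suc i) * t * p) = p^2 * (of_nat i * t^2 + k * (1 + t*p))"
    using k by (simp add: algebra_simps power2_eq_square)
  then show ?case by simp
qed

(* The factor 2 avoids dividing n (n - 1) by 2 in the second order term. *)
lemma geometric_sum_one_plus_mult_dvd:
  fixes p t :: "'a::comm_ring_1"
  shows "p^2 dvd 2 * (\<Sum>i<n. (1 + t*p)^i) - of_nat n * (2 + t * p * (of_nat n - 1))"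
proof (induction n)
  case 0
  then show ?case by simp
next
  case (Suc n)
  have split: "2 * (\<Sum>i<Suc n. (1 + t*p)^i) - of_nat (Suc n) * (2 + t * p * (of_nat (Suc n) - 1))
      = (2 * (\<Sum>i<n. (1 + t*p)^i) - of_nat n * (2 + t * p * (of_nat n - 1)))
        + 2 * ((1 + t*p)^n - (1 + of_nat n * t * p))"
    by (simp add: algebra_simps)
  show ?case
    unfolding split by (intro dvd_add Suc dvd_mult power_one_plus_mult_dvd)
qed

lemma geometric_sum_prime_cong:
  fixes p y :: int
  assumes "prime p" "odd p" "[y = 1] (mod p)"
  shows "[(\<Sum>i<nat p. y^i) = p] (mod p^2)"
proof -
  define S where "S = (\<Sum>i<nat p. y^i)"
  obtain t where t: "y = 1 + t*p"
    using assms(3) unfolding cong_iff_dvd_diff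
    by (metis dvd_def add.commute diff_add_cancel mult.commute)
  have "p > 1"
    using assms(1) prime_gt_1_int by blast
  then have "p^2 dvd 2 * S - p * (2 + t * p * (p - 1))"
    using geometric_sum_one_plus_mult_dvd[of p t "nat p"] t unfolding S_def by simp
  moreover have "p^2 dvd p * (t * p * (p - 1))"
    by (simp add: power2_eq_square)
  ultimately have "p^2 dvd (2 * S - p * (2 + t * p * (p - 1))) + p * (t * p * (p - 1))"
    by (rule dvd_add)
  then have "p^2 dvd 2 * (S - p)"
    by (simp add: algebra_simps)
  moreover have "coprime (p^2) 2"
    using assms(2) by simp
  ultimately show ?thesis
    unfolding S_def[symmetric] cong_iff_dvd_diff
    using coprime_dvd_mult_right_iff by blast
qed

lemma multiplicity_geometric_sum_prime:
  fixes p y :: int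
  assumes "prime p" "odd p" "[y = 1] (mod p)"
  shows "multiplicity p (\<Sum>i<nat p. y^i) = 1"
proof -
  define S where "S = (\<Sum>i<nat p. y^i)"
  have S_cong: "p^2 dvd S - p"
    using geometric_sum_prime_cong[OF assms] unfolding S_def cong_iff_dvd_diff .
  then have "p dvd S - p + p"
    by (intro dvd_add) (auto intro: dvd_trans[of p "p^2"] simp: power2_eq_square)
  then have "p dvd S"
    by simp
  moreover have "\<not> p^2 dvd S"
  proof
    assume "p^2 dvd S"
    then have "p^2 dvd S - (S - p)"
      using S_cong by (rule dvd_diff)
    then have "p^2 \<le> p"
      using assms(1) prime_gt_0_int by (intro zdvd_imp_le) auto
    then show False
      using assms(1) prime_gt_1_int[of p] by (simp add: power2_eq_square)
  qed
  ultimately show ?thesis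
    unfolding S_def[symmetric] using multiplicity_eqI[of p 1 S] by (simp add: numeral_2_eq_2)
qed

(* Lifting the exponent: split off one factor p of n and apply the previous lemma to x^(n/p). *)
lemma multiplicity_geometric_sum:
  fixes p x :: int
  assumes "prime p" "odd p" "[x = 1] (mod p)" "x > 0" "n > 0"
  shows "multiplicity p (\<Sum>j<n. x^j) = multiplicity p (int n)"
  using \<open>n > 0\<close>
proof (induction n rule: less_induct)
  case (less n)
  have p_prime_elem: "prime_elem p"
    using assms(1) by (rule prime_imp_prime_elem)
  show ?case
  proof (cases "p dvd int n")
    case False
    have "[(\<Sum>j<n. x^j) = (\<Sum>j<n. 1)] (mod p)"
      by (rule cong_sum) (use cong_pow[OF assms(3)] in simp)
    then have "\<not> p dvd (\<Sum>j<n. x^j)"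
      using False cong_dvd_iff by fastforce
    then show ?thesis
      using False by (simp add: not_dvd_imp_multiplicity_0)
  next
    case True
    then obtain m where n_eq: "n = m * nat p"
      using assms(1) prime_gt_0_int[of p]
      by (metis dvd_def mult.commute nat_mult_distrib nat_int order_less_imp_le)
    have "m > 0" "m < n"
      using less.prems n_eq prime_gt_1_int[OF assms(1)] by (auto simp: nat_mult_distrib)
    have "[x^m = 1] (mod p)"
      using cong_pow[OF assms(3), of m] by simp
    then have mult_T: "multiplicity p (\<Sum>i<nat p. (x^m)^i) = 1"
      using assms(1,2) by (rule multiplicity_geometric_sum_prime[rotated 2])
    have "(\<Sum>j<m. x^j) > 0"
      using \<open>m > 0\<close> assms(4) by (intro sum_pos) auto
    then have "multiplicity p (\<Sum>j<n. x^j) = multiplicity p (int m) + 1"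
      unfolding n_eq geometric_sum_mult_split using mult_T less.IH[OF \<open>m < n\<close> \<open>m > 0\<close>]
      by (subst prime_elem_multiplicity_mult_distrib[OF p_prime_elem]) auto
    moreover have "multiplicity p (int n) = multiplicity p (int m) + 1"
      using prime_elem_multiplicity_mult_distrib[OF p_prime_elem, of "int m" p] \<open>m > 0\<close>
        multiplicity_self[OF _ prime_elem_not_unit[OF p_prime_elem]] prime_gt_0_int[OF assms(1)]
      by (simp add: n_eq)
    ultimately show ?thesis
      by simp
  qed
qed

lemma poly_I_poly: "poly (I_poly N) x = (\<Sum>j<N. (x^3)^j)"
  unfolding I_poly_def by (simp add: poly_sum poly_monom power_mult)

lemma poly_I_poly_pos:
  fixes x :: int
  assumes "x > 0" "N > 0"
  shows "poly (I_poly N) x > 0"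
  unfolding poly_I_poly using assms by (intro sum_pos) auto

lemma multiplicity_poly_I_poly:
  fixes p x :: int
  assumes "prime p" "odd p" "[x^3 = 1] (mod p)" "x > 0" "N > 0"
  shows "multiplicity p (poly (I_poly N) x) = multiplicity p (int N)"
  unfolding poly_I_poly using multiplicity_geometric_sum[OF assms(1-3)] assms(4,5) by simp

lemma power_1_plus_3_mult_minus_self:
  fixes x :: int
  shows "x^(1 + 3*N) - x = x * (x - 1) * (x^2 + x + 1) * poly (I_poly N) x"
proof -
  have "x^(1 + 3*N) - x = x * ((x^3)^N - 1)"
    by (simp add: power_add power_mult right_diff_distrib)
  also have "\<dots> = x * (x^3 - 1) * poly (I_poly N) x"
    by (simp add: poly_I_poly power_diff_1_eq)
  finally show ?thesis
    by (simp add: algebra_simps power2_eq_square power3_eq_cube)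
qed

lemma sum_eqs_factorization:
  fixes a b c :: int
  assumes "a + b = c^z" "a + b^(1 + 3*N) = c^Z" "z \<le> Z"
  shows "b * (b - 1) * (b^2 + b + 1) * poly (I_poly N) b = c^z * (c^(Z - z) - 1)"
proof -
  have "c^z * (c^(Z - z) - 1) = b^(1 + 3*N) - b"
    using assms by (simp add: power_add[symmetric] algebra_simps)
  also have "\<dots> = b * (b - 1) * (b^2 + b + 1) * poly (I_poly N) b"
    by (rule power_1_plus_3_mult_minus_self)
  finally show ?thesis ..
qed

lemma cong_power_eq_one_if_sum_eqs:
  fixes a b c :: int
  assumes "a + b = c^z" "a + b^Suc k = c^Z" "z > 0" "Z > 0" "coprime b c"
  shows "[b^k = 1] (mod c)"
proof -
  have "c dvd (a + b^Suc k) - (a + b)"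
    using assms(1-4) by (simp add: dvd_power)
  then have "c dvd b * (b^k - 1)"
    by (simp add: right_diff_distrib)
  then show ?thesis
    using assms(5) by (metis coprime_commute coprime_dvd_mult_right_iff cong_iff_dvd_diff)
qed

lemma e_pm_spec:
  assumes "k > 0" "[A^k = 1] (mod M) \<or> [A^k = -1] (mod M)"
  shows "e_pm M A > 0" "[A ^ e_pm M A = 1] (mod M) \<or> [A ^ e_pm M A = -1] (mod M)"
  using LeastI[of "\<lambda>e. e > 0 \<and> ([A^e = 1] (mod M) \<or> [A^e = -1] (mod M))" k] assms
  unfolding e_pm_def by auto

lemma e_pm_minimal:
  assumes "0 < k" "k < e_pm M A"
  shows "\<not> [A^k = 1] (mod M)" "\<not> [A^k = -1] (mod M)"
  using not_less_Least[of k "\<lambda>e. e > 0 \<and> ([A^e = 1] (mod M) \<or> [A^e = -1] (mod M))"] assms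
  unfolding e_pm_def by auto

lemma cube_cong_one_if_e_pm_eq_3:
  fixes A M :: int
  assumes "M > 2" "e_pm M A = 3" "odd N" "[A^(3*N) = 1] (mod M)"
  shows "[A^3 = 1] (mod M)"
proof (rule ccontr)
  assume "\<not> [A^3 = 1] (mod M)"
  moreover have "N > 0"
    using assms(3) by (rule odd_pos)
  ultimately have "[A^3 = -1] (mod M)"
    using e_pm_spec[of "3*N" A M] assms(2,4) by simp
  then have "[(A^3)^N = (-1)^N] (mod M)"
    by (rule cong_pow)
  then have "[1 = -1] (mod M)"
    using assms(3,4) by (metis cong_sym cong_trans power_mult neg_one_odd_power)
  then have "M dvd 2"
    by (simp add: cong_iff_dvd_diff)
  then show False
    using assms(1) by (auto dest: zdvd_imp_le)
qed

lemma prime_dvd_cube_root_of_unity: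
  fixes p x :: int
  assumes "prime p" "[x^3 = 1] (mod p)" "\<not> [x = 1] (mod p)"
  shows "p dvd x^2 + x + 1"
proof -
  have "x^3 - 1 = (x - 1) * (x^2 + x + 1)"
    by (simp add: algebra_simps power2_eq_square power3_eq_cube)
  then show ?thesis
    using assms by (auto simp: prime_dvd_mult_iff cong_iff_dvd_diff)
qed

lemma primitive_cube_root_of_unity_if_e_pm_eq_3:
  fixes b c :: int
  assumes "prime c" "c > 2" "coprime b c" "e_pm c b = 3" "odd N" "[b^(3*N) = 1] (mod c)"
  shows "[b^3 = 1] (mod c)" "\<not> c dvd b * (b - 1)" "c dvd b^2 + b + 1"
proof -
  show b_cube: "[b^3 = 1] (mod c)"
    using assms(2,4-6) by (rule cube_cong_one_if_e_pm_eq_3)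
  have b_not_one: "\<not> [b = 1] (mod c)"
    using e_pm_minimal(1)[of 1 c b] assms(4) by simp
  moreover have "\<not> c dvd b"
    using assms(1,3) by (metis coprime_absorb_right coprime_commute not_prime_unit)
  ultimately show "\<not> c dvd b * (b - 1)"
    using assms(1) by (simp add: prime_dvd_mult_iff cong_iff_dvd_diff)
  show "c dvd b^2 + b + 1"
    using assms(1) b_cube b_not_one by (rule prime_dvd_cube_root_of_unity)
qed

lemma not_dvd_power_minus_one:
  fixes p :: "'a::comm_ring_1"
  assumes "\<not> p dvd 1" "k > 0"
  shows "\<not> p dvd p^k - 1"
proof
  assume "p dvd p^k - 1"
  moreover have "p dvd p^k"
    using assms(2) by (simp add: dvd_power)
  ultimately have "p dvd p^k - (p^k - 1)"
    by (simp only: dvd_diff)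
  then show False
    using assms(1) by simp
qed

lemma prime_power_part_of_factor:
  fixes p u S J w :: int
  assumes "prime p" "u * S * J = p^z * w" "\<not> p dvd u" "\<not> p dvd w" "p dvd S" "S > 0" "J \<noteq> 0"
    and "multiplicity p J = e"
  shows "e < z \<and> (\<exists>K > 0. gcd K p = 1 \<and> S = K * p^(z - e) \<and> u * J * K = p^e * w)"
proof -
  have p_prime_elem: "prime_elem p" and p_nonunit: "\<not> is_unit p"
    using assms(1) by (auto simp: prime_imp_prime_elem)
  have "u \<noteq> 0" "w \<noteq> 0"
    using assms(3,4) by auto
  then have "multiplicity p (u * S * J) = multiplicity p S + e"
    using assms(3,6,7,8) by (simp add: prime_elem_multiplicity_mult_distrib[OF p_prime_elem]
        not_dvd_imp_multiplicity_0)
  moreover have "multiplicity p (p^z * w) = z"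
    using \<open>w \<noteq> 0\<close> assms(1,4) p_nonunit
    by (simp add: prime_elem_multiplicity_mult_distrib[OF p_prime_elem] not_dvd_imp_multiplicity_0
        multiplicity_prime_power[OF p_prime_elem])
  ultimately have S_mult: "multiplicity p S = z - e" and "e < z"
    using assms(2,5,6) multiplicity_eq_zero_iff[of S p] p_nonunit by auto
  obtain K where K: "S = p^(z - e) * K" "\<not> p dvd K"
    using multiplicity_decompose'[of S p] assms(6) p_nonunit S_mult by auto
  have p_pow_pos: "p^(z - e) > 0"
    using assms(1) prime_gt_0_int by simp
  then have "K > 0"
    using K(1) assms(6) zero_less_mult_pos by blast
  have "p^(z - e) * (u * J * K) = p^(z - e) * (p^e * w)"
    using assms(2) K(1) \<open>e < z\<close>
    by (simp add: power_add[symmetric] algebra_simps)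
  then have "u * J * K = p^e * w"
    using p_pow_pos by (metis mult_cancel_left less_irrefl)
  moreover have "gcd K p = 1"
    using prime_imp_coprime[OF assms(1) K(2)] by (simp add: coprime_iff_gcd_eq_1 gcd.commute)
  ultimately show ?thesis
    using \<open>e < z\<close> \<open>K > 0\<close> K(1) by (auto simp: mult.commute)
qed

theorem mainTheorem9:
  fixes a b c :: int and r z Y Z N e :: nat
  assumes "prime c" and "r \<ge> 1" and "c = 2 ^ r * 3 + 1"
    and "a > 1" and "b > 1"
    and "coprime a b" and "coprime a c" and "coprime b c"
    and "e_pm c b = 3"
    and "z > 0" and "Y > 0" and "Z > 0" and "z \<le> Z"
    and "[Y = 4] (mod 6)"
    and "a + b = c ^ z" and "a + b ^ Y = c ^ Z"
    and "Y = 1 + 3 * N" and "odd N"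
    and "e = multiplicity c (int N)"
  shows "e < z \<and> (\<exists>K :: int. K > 0 \<and> gcd K c = 1 \<and>
           b ^ 2 + b + 1 = K * c ^ (z - e) \<and>
           b * (b - 1) * poly (I_poly N) b * K = c ^ e * (c ^ (Z - z) - 1))"
proof -
  have "(2::int)^r \<ge> 1"
    by simp
  then have "c > 2" "odd c"
    using assms(2,3) by (linarith, simp)
  have "N > 0"
    using assms(18) by (rule odd_pos)
  have key: "b * (b - 1) * (b^2 + b + 1) * poly (I_poly N) b = c^z * (c^(Z - z) - 1)"
    using assms(15,16,13) unfolding assms(17) by (rule sum_eqs_factorization)
  have "[b^(3*N) = 1] (mod c)"
    using assms(16,17) by (intro cong_power_eq_one_if_sum_eqs[OF assms(15) _ assms(10,12,8)]) simp
  then have b_cube: "[b^3 = 1] (mod c)" and "\<not> c dvd b * (b - 1)" "c dvd b^2 + b + 1"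
    using primitive_cube_root_of_unity_if_e_pm_eq_3[OF assms(1) \<open>c > 2\<close> assms(8,9,18)] by auto
  moreover have "b^2 + b + 1 > 0" "poly (I_poly N) b > 0"
    using assms(5) \<open>N > 0\<close> by (simp_all add: add_pos_pos poly_I_poly_pos)
  moreover from this have "z < Z"
    using key assms(5,13) by (auto simp: le_less)
  then have "\<not> c dvd c^(Z - z) - 1"
    using not_dvd_power_minus_one[of c "Z - z"] assms(1) by (auto simp: not_prime_unit)
  moreover have "multiplicity c (poly (I_poly N) b) = e"
    using multiplicity_poly_I_poly[OF assms(1) \<open>odd c\<close> b_cube _ \<open>N > 0\<close>] assms(5,19) by simp
  ultimately show ?thesis
    by (intro prime_power_part_of_factor[OF assms(1) key]) auto
qed

end
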